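(* Let $y\ge 1$ and $m\ge 2$ be integers. Consider the random walk $(X_t)_{t\ge 0}$ on $\mathbb{Z}$ with $X_0=m-1$ whose steps are independent and equal to $+y$ or $-1$, each with probability $\tfrac12$, stopped at the first time $\tau$ at which $X_\tau\in\{0\}\cup\{m,m+1,\dots,m+y-1\}$. For $j\ge 0$ let $\rho_j$ be the probability that $\tau<\infty$, $X_\tau\in\{m,\dots,m+y-1\}$, and exactly $j$ of the first $\tau$ steps are $-1$ steps, and set $$p_r(z)=\sum_{j\ge 0}\rho_j\, z^{j+1}.$$ For an integer $k$ define $$u[y,k](z)=\sum_{\substack{n\ge 0\\ (y+1)n-k<0}}\frac{z^{yn}}{2^{(y+1)n+1-k}}\binom{(y+1)n-k}{n}.$$ Then, as formal power series in $z$, $$p_r(z)=\frac{z\,u[y,m-1](z)+z^{2}\,u[y,m-2](z)+\cdots+z^{y}\,u[y,m-y](z)}{u[y,m](z)}.$$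
   Context: For an integer $a$ (possibly negative) and $n\ge 0$, $\binom{a}{n}=a(a-1)\cdots(a-n+1)/n!$. The sum defining $u[y,k]$ is finite, and is the empty sum $0$ when $k\le 0$. Before absorption the walk stays in $\{1,\dots,m-1\}$, so it cannot jump over the right absorbing set $\{m,\dots,m+y-1\}$. $p_r$ is the generating function for absorption at one of the right-hand barriers $m,\dots,m+y-1$, with $z$ marking backward steps and an extra overall factor $z$. *)

theory Defs
  imports Complex_Main "HOL-Computational_Algebra.Formal_Power_Series"
begin

definition walk_pos :: "nat \<Rightarrow> int \<Rightarrow> bool list \<Rightarrow> int" where
  "walk_pos y m s = m - 1 + (\<Sum>b\<leftarrow>s. if b then int y else -1)"

definition absorbing :: "nat \<Rightarrow> int \<Rightarrow> int set" where
  "absorbing y m = {0} \<union> {m..m + int y - 1}"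

definition absorbed_right :: "nat \<Rightarrow> int \<Rightarrow> bool list \<Rightarrow> bool" where
  "absorbed_right y m s \<longleftrightarrow>
     (\<forall>t < length s. walk_pos y m (take t s) \<notin> absorbing y m) \<and>
     walk_pos y m s \<in> {m..m + int y - 1}"

text \<open>rho_j: probability of the event {tau < infinity, X_tau in the right set,
  exactly j of the first tau steps are -1}; each step sequence of length L has
  probability 1/2^L, and the event is the disjoint union over L.\<close>
definition rho :: "nat \<Rightarrow> int \<Rightarrow> nat \<Rightarrow> real" where
  "rho y m j = (\<Sum>L. real (card {s. length s = L \<and> absorbed_right y m s \<and>
                                     length (filter Not s) = j}) / 2 ^ L)"

definition p_r :: "nat \<Rightarrow> int \<Rightarrow> real fps" where
  "p_r y m = Abs_fps (\<lambda>i. if i = 0 then 0 else rho y m (i - 1))"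

text \<open>u[y,k](z), a finite sum (binomial with possibly negative integer top).\<close>
definition u :: "nat \<Rightarrow> int \<Rightarrow> real fps" where
  "u y k = (\<Sum>n\<in>{n::nat. int ((y + 1) * n) - k < 0}.
      fps_const ((real_of_int (int ((y + 1) * n) - k) gchoose n)
                 / ((2::real) powi (int ((y + 1) * n) + 1 - k))) * fps_X ^ (y * n))"

end

theory Submission
  imports Defs
begin

text \<open>
  Let L a be the generating function of absorption at 0 for the walk started at a, with z marking
  the -1 steps. Conditioning on the first step, 2 L a = L (a + y) + z L (a - 1) for 0 < a < m,
  while L 0 = 1 and L a = 0 for a \<ge> m; these equations have only one solution. Pascal's rule gives
  2 u[y,k] = u[y,k+1] + z^y u[y,k-y] for k \<ge> 1, so the solution is z^a u[y,m-a] / u[y,m].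
  Finally, reading a path absorbed on the right backwards and reflecting it by x \<mapsto> m - x
  keeps the kind of every step; flipping its last (+y) step yields a path absorbed at 0 from some
  start i \<in> {1..y} with one more -1 step. Hence p_r is the sum of the L i over i \<in> {1..y}.
\<close>

text \<open>binom_weight ((y + 1) * n - k) n is the coefficient of z^(y n) in u[y,k]; since it
  vanishes outside the summation range of u, that range may be enlarged freely.\<close>

definition binom_weight :: "int \<Rightarrow> nat \<Rightarrow> real" where
  "binom_weight a n = (if a < 0 then (of_int a gchoose n) / 2 powi (a + 1) else 0)"

lemma binom_weight_Suc:
  "2 * binom_weight a (Suc n) = binom_weight (a - 1) (Suc n) + binom_weight (a - 1) n"
proof -
  have pascal: "(of_int a gchoose Suc n :: real) = (of_int (a - 1) gchoose Suc n) + (of_int (a - 1) gchoose n)"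
    using gbinomial_Suc_Suc[of "of_int (a - 1) :: real" n] by simp
  consider "a < 0" | "a = 0" | "a > 0" by linarith
  then show ?thesis
  proof cases
    case 1
    have "(2::real) powi (a + 1) = 2 * 2 powi a"
      by (simp add: power_int_add_1')
    then show ?thesis
      using 1 pascal by (simp add: binom_weight_def add_divide_distrib)
  next
    case 2
    then show ?thesis
      using pascal by (simp add: binom_weight_def)
  qed (simp add: binom_weight_def)
qed

lemma binom_weight_0: "a \<noteq> 0 \<Longrightarrow> 2 * binom_weight a 0 = binom_weight (a - 1) 0"
  by (auto simp: binom_weight_def power_int_add_1')

lemma u_eq_truncated_sum:
  assumes "nat k \<le> N"
  shows "u y k = (\<Sum>n<N. fps_const (binom_weight (int ((y + 1) * n) - k) n) * fps_X ^ (y * n))"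
proof -
  let ?I = "{n::nat. int ((y + 1) * n) - k < 0}"
  have "?I \<subseteq> {..<N}"
  proof
    fix n assume "n \<in> ?I"
    then have "int n + int y * int n < k"
      by (simp add: algebra_simps)
    moreover have "0 \<le> int y * int n"
      by simp
    ultimately have "int n < k"
      by linarith
    then show "n \<in> {..<N}"
      using assms by (simp add: nat_le_iff)
  qed
  then show ?thesis
    unfolding u_def
    by (intro sum.mono_neutral_cong_left) (auto simp: binom_weight_def diff_add_eq)
qed

lemma u_recurrence:
  assumes "k \<ge> 1"
  shows "2 * u y k = u y (k + 1) + fps_X ^ y * u y (k - int y)"
proof -
  define c where "c j n = fps_const (binom_weight (int ((y + 1) * n) - j) n) * fps_X ^ (y * n)"
    for j :: int and n :: nat
  define M where "M = nat k"
  have u_k: "u y k = (\<Sum>n<Suc M. c k n)"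
    unfolding c_def M_def by (rule u_eq_truncated_sum) simp
  have u_k1: "u y (k + 1) = (\<Sum>n<Suc M. c (k + 1) n)"
    unfolding c_def M_def by (rule u_eq_truncated_sum) (use assms in simp)
  have u_ky: "u y (k - int y) = (\<Sum>n<M. c (k - int y) n)"
    unfolding c_def M_def by (rule u_eq_truncated_sum) simp
  have c_0: "2 * c k 0 = c (k + 1) 0"
    using binom_weight_0[of "-k"] assms by (simp add: c_def numeral_fps_const)
  have c_Suc: "2 * c k (Suc n) = c (k + 1) (Suc n) + fps_X ^ y * c (k - int y) n" for n
  proof -
    define a where "a = int ((y + 1) * Suc n) - k"
    have "2 * c k (Suc n) = fps_const (2 * binom_weight a (Suc n)) * fps_X ^ (y * Suc n)"
      by (simp add: c_def a_def numeral_fps_const)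
    also have "\<dots> = fps_const (binom_weight (a - 1) (Suc n)) * fps_X ^ (y * Suc n)
                    + fps_const (binom_weight (a - 1) n) * fps_X ^ (y * Suc n)"
      by (simp add: binom_weight_Suc distrib_right flip: fps_const_add)
    also have "\<dots> = c (k + 1) (Suc n) + fps_X ^ y * c (k - int y) n"
      by (simp add: c_def a_def power_add algebra_simps)
    finally show ?thesis .
  qed
  have "2 * u y k = 2 * c k 0 + (\<Sum>n<M. 2 * c k (Suc n))"
    unfolding u_k sum.lessThan_Suc_shift by (simp add: sum_distrib_left)
  also have "\<dots> = (c (k + 1) 0 + (\<Sum>n<M. c (k + 1) (Suc n))) + fps_X ^ y * (\<Sum>n<M. c (k - int y) n)"
    by (simp add: c_0 c_Suc sum.distrib sum_distrib_left)
  also have "\<dots> = u y (k + 1) + fps_X ^ y * u y (k - int y)"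
    unfolding u_k1 u_ky sum.lessThan_Suc_shift ..
  finally show ?thesis .
qed

lemma u_nonpos: "k \<le> 0 \<Longrightarrow> u y k = 0"
  using u_eq_truncated_sum[of k 0 y] by simp

lemma u_nth_0:
  assumes "y \<ge> 1" and "k \<ge> 1"
  shows "fps_nth (u y k) 0 = 2 powi (k - 1)"
proof -
  have "u y k = (\<Sum>n<Suc (nat k). fps_const (binom_weight (int ((y + 1) * n) - k) n) * fps_X ^ (y * n))"
    by (rule u_eq_truncated_sum) simp
  then show ?thesis
    unfolding sum.lessThan_Suc_shift
    using assms by (simp add: fps_sum_nth binom_weight_def power_int_diff)
qed

definition first_step_equations :: "nat \<Rightarrow> int \<Rightarrow> (nat \<Rightarrow> real fps) \<Rightarrow> bool" where
  "first_step_equations y m F \<longleftrightarrow>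
     (\<forall>a. 1 \<le> a \<longrightarrow> int a < m \<longrightarrow> 2 * F a = F (a + y) + fps_X * F (a - 1)) \<and>
     (\<forall>a. m \<le> int a \<longrightarrow> F a = 0)"

lemma first_step_equations_unique:
  assumes "y \<ge> 1" and F: "first_step_equations y m F" and G: "first_step_equations y m G"
    and "F 0 = G 0"
  shows "F = G"
proof -
  define D where "D a = F a - G a" for a
  have D_rec: "2 * D a = D (a + y) + fps_X * D (a - 1)" if "1 \<le> a" "int a < m" for a
    using F G that unfolding first_step_equations_def D_def by (simp add: algebra_simps)
  have D_right: "D a = 0" if "m \<le> int a" for a
    using F G that unfolding first_step_equations_def D_def by simp
  \<comment> \<open>For a fixed coefficient the z-term only involves the previous coefficient, so the
     equations reduce to 2 D a = D (a + y), and D a = 0 by descending induction from m.\<close>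
  have D_descend: "fps_nth (D a) j = 0" if shift: "\<forall>a. fps_nth (fps_X * D a) j = 0" for a j
  proof (induction "nat (m - int a)" arbitrary: a rule: less_induct)
    case less
    consider "a = 0" | "m \<le> int a" | "1 \<le> a" "int a < m"
      by linarith
    then show ?case
    proof cases
      case 1
      then show ?thesis using \<open>F 0 = G 0\<close> by (simp add: D_def)
    next
      case 2
      then show ?thesis by (simp add: D_right)
    next
      case 3
      have "2 * fps_nth (D a) j = fps_nth (D (a + y)) j"
        using arg_cong[OF D_rec[OF 3], of "\<lambda>f. fps_nth f j"] shift by (simp add: numeral_fps_const)
      moreover have "fps_nth (D (a + y)) j = 0"
        using 3 \<open>y \<ge> 1\<close> by (intro less) auto
      ultimately show ?thesis by simp
    qed
  qed
  have "fps_nth (D a) j = 0" for a j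
  proof (induction j arbitrary: a)
    case 0
    show ?case by (rule D_descend) simp
  next
    case (Suc j)
    then show ?case by (intro D_descend) simp
  qed
  then show ?thesis
    by (auto intro!: ext fps_ext simp: D_def)
qed

lemma first_step_equations_u:
  "first_step_equations y m (\<lambda>a. fps_X ^ a * u y (m - int a) * c)"
proof -
  have "2 * (fps_X ^ a * u y (m - int a) * c) =
        fps_X ^ (a + y) * u y (m - int (a + y)) * c + fps_X * (fps_X ^ (a - 1) * u y (m - int (a - 1)) * c)"
    if "1 \<le> a" "int a < m" for a
  proof -
    obtain b where a: "a = Suc b"
      using \<open>1 \<le> a\<close> by (cases a) auto
    have rec: "2 * u y (m - int a) = u y (m - int b) + fps_X ^ y * u y (m - int (a + y))"
      using u_recurrence[of "m - int a" y] that by (simp add: a algebra_simps)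
    have "2 * (fps_X ^ a * u y (m - int a) * c) = fps_X * fps_X ^ b * c * (2 * u y (m - int a))"
      by (simp add: a mult_ac)
    also have "\<dots> = fps_X * fps_X ^ b * c * (u y (m - int b) + fps_X ^ y * u y (m - int (a + y)))"
      by (simp only: rec)
    finally show ?thesis
      by (simp add: a power_add algebra_simps)
  qed
  then show ?thesis
    unfolding first_step_equations_def by (simp add: u_nonpos)
qed

definition displacement :: "nat \<Rightarrow> bool list \<Rightarrow> int" where
  "displacement y s = (\<Sum>b\<leftarrow>s. if b then int y else -1)"

lemma displacement_simps [simp]:
  "displacement y [] = 0"
  "displacement y (b # s) = (if b then int y else -1) + displacement y s"
  "displacement y (s @ t) = displacement y s + displacement y t"
  "displacement y (rev s) = displacement y s"
  by (simp_all add: displacement_def sum_list_rev flip: rev_map)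

lemma displacement_eq_count:
  "displacement y s = int y * int (length (filter id s)) - int (length (filter Not s))"
  by (induction s) (auto simp: algebra_simps)

lemma finite_paths_displacement_le:
  assumes "y \<ge> 1"
  shows "finite {s. length (filter Not s) = j \<and> displacement y s \<le> d}"
proof (rule finite_subset)
  show "{s. length (filter Not s) = j \<and> displacement y s \<le> d} \<subseteq> {s. length s \<le> nat d + 2 * j}"
  proof
    fix s assume "s \<in> {s. length (filter Not s) = j \<and> displacement y s \<le> d}"
    then have s: "displacement y s \<le> d" "j = length (filter Not s)"
      by simp_all
    have "int (length (filter id s)) \<le> int y * int (length (filter id s))"
      using assms by (simp add: mult_le_cancel_right1)
    then have "int (length (filter id s)) \<le> d + int j"
      using s displacement_eq_count[of y s] by linarith
    moreover have "length s = length (filter id s) + j"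
      using s sum_length_filter_compl[of id s] by simp
    ultimately show "s \<in> {s. length s \<le> nat d + 2 * j}"
      by simp
  qed
qed (use finite_lists_length_le[of "UNIV :: bool set"] in simp)

definition path_gf :: "(bool list \<Rightarrow> bool) \<Rightarrow> real fps" where
  "path_gf P = Abs_fps (\<lambda>j. \<Sum>s | P s \<and> length (filter Not s) = j. 1 / 2 ^ length s)"

lemma path_gf_first_step:
  assumes "\<not> P []" and fin: "\<And>j. finite {s. P s \<and> length (filter Not s) = j}"
  shows "2 * path_gf P = path_gf (\<lambda>s. P (True # s)) + fps_X * path_gf (\<lambda>s. P (False # s))"
proof (rule fps_ext)
  fix j
  let ?w = "\<lambda>s::bool list. 1 / 2 ^ length s :: real"
  define A where "A = {s. P (True # s) \<and> length (filter Not s) = j}"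
  define B where "B = {s. P (False # s) \<and> Suc (length (filter Not s)) = j}"
  have split: "{s. P s \<and> length (filter Not s) = j} = Cons True ` A \<union> Cons False ` B"
  proof (rule set_eqI)
    fix s
    show "s \<in> {s. P s \<and> length (filter Not s) = j} \<longleftrightarrow> s \<in> Cons True ` A \<union> Cons False ` B"
      using \<open>\<not> P []\<close> by (cases s) (auto simp: A_def B_def)
  qed
  have "fps_nth (2 * path_gf P) j = 2 * (\<Sum>s\<in>Cons True ` A. ?w s) + 2 * (\<Sum>s\<in>Cons False ` B. ?w s)"
    unfolding path_gf_def split numeral_fps_const fps_mult_left_const_nth fps_nth_Abs_fps
    by (subst sum.union_disjoint) (use fin[of j] split in \<open>auto intro: finite_subset\<close>)
  also have "\<dots> = (\<Sum>s\<in>A. ?w s) + (\<Sum>s\<in>B. ?w s)"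
    by (simp add: sum.reindex sum_distrib_left)
  also have "(\<Sum>s\<in>B. ?w s) = fps_nth (fps_X * path_gf (\<lambda>s. P (False # s))) j"
    by (cases j) (simp_all add: B_def path_gf_def)
  finally show "fps_nth (2 * path_gf P) j =
      fps_nth (path_gf (\<lambda>s. P (True # s)) + fps_X * path_gf (\<lambda>s. P (False # s))) j"
    by (simp add: A_def path_gf_def)
qed

lemma path_gf_bij_betw_shift:
  assumes bij: "bij_betw f {s. P s} {s. Q s}"
    and len: "\<And>s. P s \<Longrightarrow> length (f s) = length s"
    and downs: "\<And>s. P s \<Longrightarrow> length (filter Not (f s)) = Suc (length (filter Not s))"
  shows "path_gf Q = fps_X * path_gf P"
proof (rule fps_ext)
  fix j
  let ?A = "{s. P s \<and> Suc (length (filter Not s)) = j}"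
  have img: "{s. Q s \<and> length (filter Not s) = j} = f ` ?A"
    using bij_betw_imp_surj_on[OF bij] downs by force
  have inj: "inj_on f ?A"
    using bij_betw_imp_inj_on[OF bij] by (rule inj_on_subset) auto
  have "fps_nth (path_gf Q) j = (\<Sum>s\<in>?A. 1 / 2 ^ length s)"
    unfolding path_gf_def fps_nth_Abs_fps img sum.reindex[OF inj] by (simp add: len)
  also have "\<dots> = fps_nth (fps_X * path_gf P) j"
    by (cases j) (simp_all add: path_gf_def)
  finally show "fps_nth (path_gf Q) j = fps_nth (fps_X * path_gf P) j" .
qed

lemma path_gf_disjoint_Union:
  assumes "finite I"
    and "\<And>i i' s. i \<in> I \<Longrightarrow> i' \<in> I \<Longrightarrow> P i s \<Longrightarrow> P i' s \<Longrightarrow> i = i'"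
    and "\<And>i j. i \<in> I \<Longrightarrow> finite {s. P i s \<and> length (filter Not s) = j}"
  shows "path_gf (\<lambda>s. \<exists>i\<in>I. P i s) = (\<Sum>i\<in>I. path_gf (P i))"
proof (rule fps_ext)
  fix j
  define A where "A i = {s. P i s \<and> length (filter Not s) = j}" for i
  have "{s. (\<exists>i\<in>I. P i s) \<and> length (filter Not s) = j} = (\<Union>i\<in>I. A i)"
    by (auto simp: A_def)
  moreover have "(\<Sum>s\<in>(\<Union>i\<in>I. A i). 1 / 2 ^ length s) =
                 (\<Sum>i\<in>I. \<Sum>s\<in>A i. 1 / 2 ^ length s :: real)"
    by (rule sum.UNION_disjoint) (use assms in \<open>auto simp: A_def\<close>)
  ultimately show "fps_nth (path_gf (\<lambda>s. \<exists>i\<in>I. P i s)) j =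
                   fps_nth (\<Sum>i\<in>I. path_gf (P i)) j"
    by (simp add: path_gf_def fps_sum_nth A_def)
qed

lemma suminf_card_length_eq_sum:
  assumes fin: "finite {s :: bool list. P s}"
  shows "(\<Sum>L. real (card {s. length s = L \<and> P s}) / 2 ^ L) = (\<Sum>s | P s. 1 / 2 ^ length s)"
proof -
  let ?F = "{s. P s}"
  have layer: "real (card {s. length s = L \<and> P s}) / 2 ^ L =
                (\<Sum>s | s \<in> ?F \<and> length s = L. 1 / 2 ^ length s)" for L
  proof -
    have "{s. s \<in> ?F \<and> length s = L} = {s. length s = L \<and> P s}"
      by auto
    then show ?thesis
      by (simp add: divide_inverse)
  qed
  have "(\<Sum>L. real (card {s. length s = L \<and> P s}) / 2 ^ L) =
        (\<Sum>L\<in>length ` ?F. \<Sum>s | s \<in> ?F \<and> length s = L. 1 / 2 ^ length s)"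
    unfolding layer by (rule suminf_finite) (use fin in auto)
  also have "\<dots> = (\<Sum>s\<in>?F. 1 / 2 ^ length s)"
    by (rule sum.group) (use fin in auto)
  finally show ?thesis .
qed

definition absorbed_left :: "nat \<Rightarrow> int \<Rightarrow> nat \<Rightarrow> bool list \<Rightarrow> bool" where
  "absorbed_left y m a s \<longleftrightarrow>
     (\<forall>t < length s. int a + displacement y (take t s) \<in> {1..m - 1}) \<and> int a + displacement y s = 0"

lemma absorbed_left_0: "absorbed_left y m 0 s \<longleftrightarrow> s = []"
  by (cases s) (auto simp: absorbed_left_def)

lemma absorbed_left_Nil: "absorbed_left y m a [] \<longleftrightarrow> a = 0"
  by (simp add: absorbed_left_def)

lemma absorbed_left_outside: "1 \<le> m \<Longrightarrow> m \<le> int a \<Longrightarrow> \<not> absorbed_left y m a s"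
  by (cases s) (auto simp: absorbed_left_def)

lemma absorbed_left_Cons:
  assumes "1 \<le> a" and "int a < m"
  shows "absorbed_left y m a (b # s) \<longleftrightarrow> absorbed_left y m (if b then a + y else a - 1) s"
proof -
  have "int (if b then a + y else a - 1) = int a + (if b then int y else -1)"
    using assms by auto
  then show ?thesis
    using assms unfolding absorbed_left_def
    by (simp only: length_Cons All_less_Suc2 take_0 take_Suc_Cons displacement_simps) (simp add: add.assoc)
qed

lemma finite_absorbed_left:
  "y \<ge> 1 \<Longrightarrow> finite {s. absorbed_left y m a s \<and> length (filter Not s) = j}"
  by (rule finite_subset[OF _ finite_paths_displacement_le[of y j 0]]) (auto simp: absorbed_left_def)

lemma first_step_equations_absorbed_left:
  assumes "y \<ge> 1" and "m \<ge> 1"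
  shows "first_step_equations y m (\<lambda>a. path_gf (absorbed_left y m a))"
  unfolding first_step_equations_def
proof safe
  fix a :: nat assume "1 \<le> a" "int a < m"
  then show "2 * path_gf (absorbed_left y m a) =
      path_gf (absorbed_left y m (a + y)) + fps_X * path_gf (absorbed_left y m (a - 1))"
    using path_gf_first_step[of "absorbed_left y m a"] finite_absorbed_left[OF \<open>y \<ge> 1\<close>]
    by (simp add: absorbed_left_Cons absorbed_left_Nil)
next
  fix a :: nat assume "m \<le> int a"
  then show "path_gf (absorbed_left y m a) = 0"
    using absorbed_left_outside[OF \<open>m \<ge> 1\<close>] by (simp add: path_gf_def fps_zero_def)
qed

lemma path_gf_absorbed_left:
  assumes "y \<ge> 1" and "m \<ge> 1"
  shows "path_gf (absorbed_left y m a) = fps_X ^ a * u y (m - int a) * inverse (u y m)"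
proof -
  have "{s. absorbed_left y m 0 s \<and> length (filter Not s) = j} = (if j = 0 then {[]} else {})" for j
    by (auto simp: absorbed_left_0)
  then have "path_gf (absorbed_left y m 0) = 1"
    by (intro fps_ext) (simp add: path_gf_def)
  moreover have "u y m * inverse (u y m) = 1"
    using u_nth_0[OF assms] by (intro inverse_mult_eq_1') simp
  ultimately have "(\<lambda>a. path_gf (absorbed_left y m a)) =
                   (\<lambda>a. fps_X ^ a * u y (m - int a) * inverse (u y m))"
    using first_step_equations_absorbed_left[OF assms] first_step_equations_u
    by (intro first_step_equations_unique[OF \<open>y \<ge> 1\<close>]) simp_all
  then show ?thesis
    by (rule fun_cong)
qed

definition stays_within :: "nat \<Rightarrow> int set \<Rightarrow> int \<Rightarrow> bool list \<Rightarrow> bool" where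
  "stays_within y A x s \<longleftrightarrow> (\<forall>k \<le> length s. x + displacement y (take k s) \<in> A)"

lemma stays_within_rev:
  assumes "stays_within y A x s" and "\<And>z. z \<in> A \<Longrightarrow> c - z \<in> B"
  shows "stays_within y B (c - (x + displacement y s)) (rev s)"
  unfolding stays_within_def
proof safe
  fix k assume "k \<le> length (rev s)"
  then have "x + displacement y (take (length s - k) s) \<in> A"
    using assms(1) by (simp add: stays_within_def)
  moreover have "displacement y s = displacement y (take (length s - k) s) + displacement y (drop (length s - k) s)"
    by (metis displacement_simps(3) append_take_drop_id)
  ultimately show "c - (x + displacement y s) + displacement y (take k (rev s)) \<in> B"
    using assms(2) by (simp add: take_rev algebra_simps)
qed

lemma absorbed_left_iff_snoc:
  assumes "1 \<le> i"
  shows "absorbed_left y m i s \<longleftrightarrow>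
         (\<exists>s1. s = s1 @ [False] \<and> stays_within y {1..m - 1} (int i) s1 \<and>
               int i + displacement y s1 = 1)" (is "_ \<longleftrightarrow> ?snoc")
proof
  assume left: "absorbed_left y m i s"
  then have "s \<noteq> []"
    using assms by (auto simp: absorbed_left_def)
  then obtain s1 b where s: "s = s1 @ [b]"
    by (metis append_butlast_last_id)
  have inside: "stays_within y {1..m - 1} (int i) s1"
    using left by (auto simp: absorbed_left_def stays_within_def s)
  then have "int i + displacement y s1 \<ge> 1"
    by (auto simp: stays_within_def)
  with left show ?snoc
    using inside by (auto simp: absorbed_left_def s split: if_splits)
next
  assume ?snoc
  then show "absorbed_left y m i s"
    by (auto simp: absorbed_left_def stays_within_def)
qed

lemma walk_pos_eq_displacement: "walk_pos y m s = m - 1 + displacement y s"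
  by (simp add: walk_pos_def displacement_def)

text \<open>A -1 step cannot jump over 0 and a +y step cannot jump over {m..m+y-1}.\<close>

lemma inside_before_absorption:
  assumes "m \<ge> 2" and avoid: "\<forall>t < length s. walk_pos y m (take t s) \<notin> absorbing y m"
    and "t < length s"
  shows "walk_pos y m (take t s) \<in> {1..m - 1}"
  using \<open>t < length s\<close>
proof (induction t)
  case 0
  then show ?case
    using \<open>m \<ge> 2\<close> by (simp add: walk_pos_eq_displacement)
next
  case (Suc t)
  have "walk_pos y m (take (Suc t) s) = walk_pos y m (take t s) + (if s ! t then int y else -1)"
    using Suc.prems by (simp add: take_Suc_conv_app_nth walk_pos_eq_displacement)
  moreover have "walk_pos y m (take (Suc t) s) \<notin> absorbing y m"
    using avoid Suc.prems by blast
  ultimately show ?case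
    using Suc by (auto simp: absorbing_def split: if_splits)
qed

lemma absorbed_right_iff_snoc:
  assumes "m \<ge> 2"
  shows "absorbed_right y m s \<longleftrightarrow>
         (\<exists>s0. s = s0 @ [True] \<and> stays_within y {1..m - 1} (m - 1) s0 \<and>
               1 - int y \<le> displacement y s0)" (is "_ \<longleftrightarrow> ?snoc")
proof
  assume right: "absorbed_right y m s"
  then have "s \<noteq> []"
    by (auto simp: absorbed_right_def walk_pos_eq_displacement)
  then obtain s0 b where s: "s = s0 @ [b]"
    by (metis append_butlast_last_id)
  have avoid: "\<forall>t < length s. walk_pos y m (take t s) \<notin> absorbing y m"
    using right by (simp add: absorbed_right_def)
  have inside: "stays_within y {1..m - 1} (m - 1) s0"
    unfolding stays_within_def
  proof (intro allI impI)
    fix k assume "k \<le> length s0"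
    then have "k < length s" and "take k s = take k s0"
      by (simp_all add: s)
    then show "m - 1 + displacement y (take k s0) \<in> {1..m - 1}"
      using inside_before_absorption[OF assms avoid] by (metis walk_pos_eq_displacement)
  qed
  then have "displacement y s0 \<le> 0"
    by (auto simp: stays_within_def)
  with right show ?snoc
    using inside by (auto simp: absorbed_right_def walk_pos_eq_displacement s split: if_splits)
next
  assume ?snoc
  then obtain s0 where s: "s = s0 @ [True]" and inside: "stays_within y {1..m - 1} (m - 1) s0"
    and "1 - int y \<le> displacement y s0"
    by blast
  moreover from inside have "displacement y s0 \<le> 0"
    by (auto simp: stays_within_def)
  moreover have "walk_pos y m (take t s) \<notin> absorbing y m" if "t < length s" for t
  proof -
    have "t \<le> length s0" and "take t s = take t s0"
      using that by (simp_all add: s)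
    with inside have "walk_pos y m (take t s) \<in> {1..m - 1}"
      by (simp add: stays_within_def walk_pos_eq_displacement)
    then show ?thesis
      by (auto simp: absorbing_def)
  qed
  ultimately show "absorbed_right y m s"
    by (auto simp: absorbed_right_def walk_pos_eq_displacement)
qed

text \<open>Time reversal composed with the reflection x \<mapsto> m - x maps every step to a step of the
  same kind; flipping the final step exchanges absorption on the right and absorption at 0.\<close>

definition reverse_path :: "bool list \<Rightarrow> bool list" where
  "reverse_path s = rev (butlast s) @ [\<not> last s]"

lemma reverse_path_snoc [simp]: "reverse_path (s @ [b]) = rev s @ [\<not> b]"
  by (simp add: reverse_path_def)

lemma bij_betw_reverse_path:
  assumes "m \<ge> 2"
  shows "bij_betw reverse_path {s. absorbed_right y m s} {s. \<exists>i\<in>{1..y}. absorbed_left y m i s}"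
proof (rule bij_betw_byWitness[where f' = reverse_path])
  show "\<forall>s\<in>{s. absorbed_right y m s}. reverse_path (reverse_path s) = s"
    using absorbed_right_iff_snoc[OF assms] by auto
  show "\<forall>s\<in>{s. \<exists>i\<in>{1..y}. absorbed_left y m i s}. reverse_path (reverse_path s) = s"
    using absorbed_left_iff_snoc by fastforce
  show "reverse_path ` {s. absorbed_right y m s} \<subseteq> {s. \<exists>i\<in>{1..y}. absorbed_left y m i s}"
  proof safe
    fix s assume "absorbed_right y m s"
    then obtain s0 where s: "s = s0 @ [True]" and inside: "stays_within y {1..m - 1} (m - 1) s0"
      and low: "1 - int y \<le> displacement y s0"
      using absorbed_right_iff_snoc[OF assms] by blast
    have "displacement y s0 \<le> 0"
      using inside by (auto simp: stays_within_def)
    define i where "i = nat (1 - displacement y s0)"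
    have i: "i \<in> {1..y}" and int_i: "int i = 1 - displacement y s0"
      using low \<open>displacement y s0 \<le> 0\<close> by (auto simp: i_def)
    have "stays_within y {1..m - 1} (int i) (rev s0)"
      using stays_within_rev[OF inside, of m "{1..m - 1}"] by (simp add: int_i)
    then have "absorbed_left y m i (reverse_path s)"
      using i int_i absorbed_left_iff_snoc[of i y m] by (simp add: s)
    with i show "\<exists>i\<in>{1..y}. absorbed_left y m i (reverse_path s)"
      by blast
  qed
  show "reverse_path ` {s. \<exists>i\<in>{1..y}. absorbed_left y m i s} \<subseteq> {s. absorbed_right y m s}"
  proof safe
    fix s i assume i: "i \<in> {1..y}" and "absorbed_left y m i s"
    then obtain s1 where s: "s = s1 @ [False]" and inside: "stays_within y {1..m - 1} (int i) s1"
      and final: "int i + displacement y s1 = 1"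
      using absorbed_left_iff_snoc[of i y m s] by auto
    have "stays_within y {1..m - 1} (m - 1) (rev s1)"
      using stays_within_rev[OF inside, of m "{1..m - 1}"] final by simp
    moreover have "1 - int y \<le> displacement y (rev s1)"
      using i final by simp
    ultimately show "absorbed_right y m (reverse_path s)"
      using absorbed_right_iff_snoc[OF assms] by (simp add: s)
  qed
qed

lemma finite_absorbed_right:
  "y \<ge> 1 \<Longrightarrow> finite {s. absorbed_right y m s \<and> length (filter Not s) = j}"
  by (rule finite_subset[OF _ finite_paths_displacement_le[of y j "int y"]])
    (auto simp: absorbed_right_def walk_pos_eq_displacement)

lemma p_r_eq_path_gf:
  assumes "y \<ge> 1"
  shows "p_r y m = fps_X * path_gf (absorbed_right y m)"
proof -
  have "rho y m j = fps_nth (path_gf (absorbed_right y m)) j" for j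
    using suminf_card_length_eq_sum[OF finite_absorbed_right[OF assms]]
    by (simp add: rho_def path_gf_def)
  then show ?thesis
    by (intro fps_ext) (simp add: p_r_def)
qed

theorem mainTheorem2:
  fixes y :: nat and m :: int
  assumes "y \<ge> 1" and "m \<ge> 2"
  shows "p_r y m = (\<Sum>i=1..y. fps_X ^ i * u y (m - int i)) / u y m"
proof -
  have "p_r y m = fps_X * path_gf (absorbed_right y m)"
    using assms(1) by (rule p_r_eq_path_gf)
  also have "\<dots> = path_gf (\<lambda>s. \<exists>i\<in>{1..y}. absorbed_left y m i s)"
    using bij_betw_reverse_path[OF assms(2)]
    by (rule path_gf_bij_betw_shift[symmetric])
      (auto simp: absorbed_right_iff_snoc[OF assms(2)] simp flip: rev_filter)
  also have "\<dots> = (\<Sum>i=1..y. path_gf (absorbed_left y m i))"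
    by (rule path_gf_disjoint_Union)
      (use finite_absorbed_left[OF assms(1)] in \<open>auto simp: absorbed_left_def\<close>)
  also have "\<dots> = (\<Sum>i=1..y. fps_X ^ i * u y (m - int i)) * inverse (u y m)"
    using assms by (simp add: path_gf_absorbed_left sum_distrib_right)
  also have "\<dots> = (\<Sum>i=1..y. fps_X ^ i * u y (m - int i)) / u y m"
    using assms by (simp add: fps_divide_unit u_nth_0)
  finally show ?thesis .
qed

end
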